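(* Let $\Omega_2=\{(x,y)\in\mathbb{R}^2: x\neq0,\ y<x^{-2}\sin(x^2)\}\cup\{(0,y):y<1\}$. Then $\Omega_2$ is a $C^\infty$ domain which has a uniformly $C^2$ defining function (in particular $\partial\Omega_2$ has positive reach), but $\Omega_2$ has no uniformly $C^3$ defining function.
   Context: A $C^m$ defining function for an open set $\Omega\subset\mathbb{R}^n$ is a real-valued $C^m$ function $\rho$ on an open neighborhood $U$ of $\partial\Omega$ with $\{x\in U:\rho<0\}=\Omega\cap U$ and $\nabla\rho\neq0$ on $\partial\Omega$. It is uniformly $C^m$ if $\operatorname{dist}(\partial\Omega,\partial U)>0$, $\sup_{U}\sum_{|\alpha|\le m}|\partial^\alpha\rho|<\infty$, and $\inf_U|\nabla\rho|>0$. Reach: with $\operatorname{Unp}(\partial\Omega)$ the set of points having a unique nearest point in $\partial\Omega$, $\operatorname{reach}(\partial\Omega)=\inf_{y\in\partial\Omega}\sup\{r\ge0:B(y,r)\subset\operatorname{Unp}(\partial\Omega)\}$. *)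

theory Defs
  imports "HOL-Analysis.Analysis"
begin

definition D1 :: "(real \<times> real \<Rightarrow> real) \<Rightarrow> real \<times> real \<Rightarrow> real" where
  "D1 f p = deriv (\<lambda>t. f (t, snd p)) (fst p)"

definition D2 :: "(real \<times> real \<Rightarrow> real) \<Rightarrow> real \<times> real \<Rightarrow> real" where
  "D2 f p = deriv (\<lambda>t. f (fst p, t)) (snd p)"

fun Cm :: "nat \<Rightarrow> (real \<times> real) set \<Rightarrow> (real \<times> real \<Rightarrow> real) \<Rightarrow> bool" where
  "Cm 0 U f = continuous_on U f"
| "Cm (Suc m) U f =
     (continuous_on U f \<and>
      (\<forall>p\<in>U. (\<lambda>t. f (t, snd p)) differentiable (at (fst p)) \<and>
              (\<lambda>t. f (fst p, t)) differentiable (at (snd p))) \<and>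
      Cm m U (D1 f) \<and> Cm m U (D2 f))"

fun pderivs :: "nat \<Rightarrow> (real \<times> real \<Rightarrow> real) \<Rightarrow> (real \<times> real \<Rightarrow> real) set" where
  "pderivs 0 f = {f}"
| "pderivs (Suc m) f = {f} \<union> pderivs m (D1 f) \<union> pderivs m (D2 f)"

definition grad :: "(real \<times> real \<Rightarrow> real) \<Rightarrow> real \<times> real \<Rightarrow> real \<times> real" where
  "grad f p = (D1 f p, D2 f p)"

definition defining_function ::
  "nat \<Rightarrow> (real \<times> real) set \<Rightarrow> (real \<times> real) set \<Rightarrow> (real \<times> real \<Rightarrow> real) \<Rightarrow> bool" where
  "defining_function m \<Omega> U \<rho> \<longleftrightarrow>
     open U \<and> frontier \<Omega> \<subseteq> U \<and> Cm m U \<rho> \<and>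
     {p\<in>U. \<rho> p < 0} = \<Omega> \<inter> U \<and>
     (\<forall>p\<in>frontier \<Omega>. grad \<rho> p \<noteq> 0)"

definition smooth_defining_function ::
  "(real \<times> real) set \<Rightarrow> (real \<times> real) set \<Rightarrow> (real \<times> real \<Rightarrow> real) \<Rightarrow> bool" where
  "smooth_defining_function \<Omega> U \<rho> \<longleftrightarrow> (\<forall>m. defining_function m \<Omega> U \<rho>)"

definition uniform_defining_function ::
  "nat \<Rightarrow> (real \<times> real) set \<Rightarrow> (real \<times> real) set \<Rightarrow> (real \<times> real \<Rightarrow> real) \<Rightarrow> bool" where
  "uniform_defining_function m \<Omega> U \<rho> \<longleftrightarrow>
     defining_function m \<Omega> U \<rho> \<and>
     (\<exists>\<delta>>0. \<forall>a\<in>frontier \<Omega>. \<forall>b\<in>frontier U. \<delta> \<le> dist a b) \<and>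
     (\<exists>B. \<forall>p\<in>U. (\<Sum>g\<in>pderivs m \<rho>. \<bar>g p\<bar>) \<le> B) \<and>
     (\<exists>c>0. \<forall>p\<in>U. c \<le> norm (grad \<rho> p))"

definition Unp :: "'a::metric_space set \<Rightarrow> 'a set" where
  "Unp S = {x. \<exists>!y. y \<in> S \<and> (\<forall>z\<in>S. dist x y \<le> dist x z)}"

definition reach :: "'a::metric_space set \<Rightarrow> ereal" where
  "reach S = (INF y\<in>S. SUP r\<in>{r::real. 0 \<le> r \<and> ball y r \<subseteq> Unp S}. ereal r)"

definition Omega2 :: "(real \<times> real) set" where
  "Omega2 = {(x, y). x \<noteq> 0 \<and> y < sin (x^2) / x^2} \<union> {(0, y) | y. y < 1}"

end

theory Submission
  imports Defs
begin

(*
  Omega2 is the region below the graph of the entire function F(x) = sin(x^2)/x^2, F(0) = 1.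
  F is given by a power series, so its derivatives F^(k) form a tower of everywhere
  differentiable functions; F' and F'' are bounded, while F''' is not: at x = sqrt(2 pi n)
  it equals -8x + 24/x^3.

  For a general profile f the file develops the geometry of the region below its graph:
  openness, connectedness and frontier (for continuous f); the defining function y - f(x), which
  is C^infinity for a smooth f and uniformly C^2 on the unit band around the graph when f' and f''
  are bounded; positive reach of the graph when f' and f'' are bounded (near the graph the squared
  distance to a graph point is strictly convex in the abscissa, so nearest points are unique);
  and the obstruction: differentiating rho(x, f x) = 0 three times shows that a uniformly C^3
  defining function forces f''' to be bounded, since D2 rho stays away from 0 on the graph.
*)

definition bounded_fun :: "(real \<Rightarrow> real) \<Rightarrow> bool" where
  "bounded_fun g \<longleftrightarrow> (\<exists>M. \<forall>x. \<bar>g x\<bar> \<le> M)"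

lemma bounded_funE:
  assumes "bounded_fun g"
  obtains M where "0 \<le> M" "\<And>x. \<bar>g x\<bar> \<le> M"
  using assms unfolding bounded_fun_def by (meson abs_ge_zero order_trans)

lemma bounded_fun_add: "bounded_fun g \<Longrightarrow> bounded_fun h \<Longrightarrow> bounded_fun (\<lambda>x. g x + h x)"
  unfolding bounded_fun_def by (meson abs_triangle_ineq add_mono order_trans)

lemma bounded_fun_mult: "bounded_fun g \<Longrightarrow> bounded_fun h \<Longrightarrow> bounded_fun (\<lambda>x. g x * h x)"
  by (elim bounded_funE, unfold bounded_fun_def abs_mult) (meson mult_mono abs_ge_zero)

lemma bounded_fun_const: "bounded_fun (\<lambda>x. c)"
  unfolding bounded_fun_def by blast

lemma bounded_fun_uminus: "bounded_fun g \<Longrightarrow> bounded_fun (\<lambda>x. - g x)"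
  unfolding bounded_fun_def by simp

lemma bounded_fun_cancel:
  assumes "bounded_fun (\<lambda>x. g x * h x)" and "0 < c" and "\<And>x. c \<le> \<bar>g x\<bar>"
  shows "bounded_fun h"
proof -
  obtain M where M: "\<And>x. \<bar>g x * h x\<bar> \<le> M" using assms(1) bounded_funE by blast
  have "\<bar>h x\<bar> \<le> M / c" for x
  proof -
    have "c * \<bar>h x\<bar> \<le> \<bar>g x\<bar> * \<bar>h x\<bar>" by (rule mult_right_mono[OF assms(3)]) simp
    with M[of x] have "c * \<bar>h x\<bar> \<le> M" by (simp add: abs_mult)
    thus ?thesis using assms(2) by (simp add: field_simps)
  qed
  thus ?thesis unfolding bounded_fun_def by blast
qed

lemma bounded_fun_if_bounded_off_interval:
  assumes "continuous_on UNIV g" and "\<And>x. 1 \<le> \<bar>x\<bar> \<Longrightarrow> \<bar>g x\<bar> \<le> M"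
  shows "bounded_fun g"
proof -
  have "compact (g ` {-1..1})"
    by (rule compact_continuous_image[OF continuous_on_subset[OF assms(1)]]) auto
  then obtain B where B: "\<And>y. y \<in> g ` {-1..1} \<Longrightarrow> \<bar>y\<bar> \<le> B"
    using compact_imp_bounded bounded_pos by (metis real_norm_def)
  have "\<bar>g x\<bar> \<le> max B M" for x
  proof (cases "1 \<le> \<bar>x\<bar>")
    case True
    thus ?thesis using assms(2)[of x] by simp
  next
    case False
    hence "x \<in> {-1..1}" by auto
    thus ?thesis using B[of "g x"] by simp
  qed
  thus ?thesis unfolding bounded_fun_def by blast
qed

lemma abs_div_le_1: "\<bar>a::real\<bar> \<le> 1 \<Longrightarrow> 1 \<le> \<bar>y\<bar> \<Longrightarrow> \<bar>a / y\<bar> \<le> 1"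
  by (simp add: abs_divide divide_le_eq_1)

lemma one_le_abs_power: "1 \<le> \<bar>x::real\<bar> \<Longrightarrow> 1 \<le> \<bar>x ^ n\<bar>"
  by (simp add: power_abs one_le_power)

section \<open>The profile F(x) = sin(x^2)/x^2 and its derivatives\<close>

(* sin(x^2) is the power series with coefficients sin_sq_coeff; dividing by x^2 shifts them
   by two. profile k is the k-th termwise derivative of the resulting entire series. *)
definition sin_sq_coeff :: "nat \<Rightarrow> real" where
  "sin_sq_coeff m = (if even m then sin_coeff (m div 2) else 0)"

definition profile_coeff :: "nat \<Rightarrow> real" where
  "profile_coeff n = sin_sq_coeff (n + 2)"

definition profile :: "nat \<Rightarrow> real \<Rightarrow> real" where
  "profile k x = (\<Sum>n. (diffs ^^ k) profile_coeff n * x ^ n)"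

lemma sin_sq_sums: "(\<lambda>m. sin_sq_coeff m * x ^ m) sums sin (x^2)"
proof -
  have "(\<lambda>n. sin_coeff n * (x^2) ^ n) sums sin (x^2)"
    using sin_converges[of "x^2"] by simp
  hence "(\<lambda>n. sin_sq_coeff (2*n) * x ^ (2*n)) sums sin (x^2)"
    by (simp add: sin_sq_coeff_def power_mult)
  moreover have "strict_mono (\<lambda>n::nat. 2*n)" by (auto simp: strict_mono_def)
  ultimately show ?thesis
    using sums_mono_reindex[of "\<lambda>n::nat. 2*n" "\<lambda>m. sin_sq_coeff m * x ^ m"]
    by (metis (no_types, lifting) sin_sq_coeff_def evenE mult_eq_0_iff rangeI)
qed

lemma profile_coeff_sums:
  assumes "x \<noteq> 0"
  shows "(\<lambda>n. profile_coeff n * x ^ n) sums (sin (x^2) / x^2)"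
proof -
  have "(\<lambda>i. sin_sq_coeff (i+2) * x ^ (i+2)) sums sin (x^2)"
    using sums_zero_iff_shift[of 2 "\<lambda>i. sin_sq_coeff i * x ^ i" "sin (x^2)"] sin_sq_sums[of x]
    by (auto simp: sin_sq_coeff_def less_2_cases_iff)
  hence "(\<lambda>n. profile_coeff n * x ^ n * x^2) sums sin (x^2)"
    by (simp add: profile_coeff_def power_add mult.assoc power2_eq_square mult.commute mult.left_commute)
  from sums_divide[OF this, of "x^2"] show ?thesis
    using assms by simp
qed

lemma profile_eq: "x \<noteq> 0 \<Longrightarrow> profile 0 x = sin (x^2) / x^2"
  using profile_coeff_sums by (simp add: profile_def sums_iff)

lemma profile_at_0: "profile 0 0 = 1"
  by (simp add: profile_def profile_coeff_def sin_sq_coeff_def sin_coeff_def)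

lemma profile_summable: "summable (\<lambda>n. (diffs ^^ k) profile_coeff n * x ^ n)"
proof (induction k arbitrary: x)
  case 0
  thus ?case using profile_coeff_sums sums_summable by (cases "x = 0") auto
next
  case (Suc k)
  thus ?case using termdiff_converges_all[of "(diffs ^^ k) profile_coeff"] by simp
qed

lemma profile_has_deriv: "(profile k has_real_derivative profile (Suc k) x) (at x)"
  unfolding profile_def
  using termdiffs_strong_converges_everywhere[OF profile_summable[of k]] by simp

lemma continuous_profile: "continuous_on A (profile k)"
  using profile_has_deriv by (meson DERIV_isCont continuous_at_imp_continuous_on)

lemma profile_derivs:
  "(profile 0 has_real_derivative profile 1 x) (at x)"
  "(profile 1 has_real_derivative profile 2 x) (at x)"
  "(profile 2 has_real_derivative profile 3 x) (at x)"
  using profile_has_deriv[of 0 x] profile_has_deriv[of 1 x] profile_has_deriv[of 2 x]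
  by (simp_all add: numeral_2_eq_2 numeral_3_eq_3)

lemma deriv_transfer_off_0:
  assumes eq: "\<And>x. x \<noteq> 0 \<Longrightarrow> profile k x = g x"
    and dg: "\<And>x. x \<noteq> 0 \<Longrightarrow> (g has_real_derivative g' x) (at x)"
    and x: "x \<noteq> 0"
  shows "profile (Suc k) x = g' x"
proof -
  have "(g has_real_derivative profile (Suc k) x) (at x)"
    by (rule has_field_derivative_transform_within_open[OF profile_has_deriv[of k x], of "-{0}"])
       (use x eq in auto)
  thus ?thesis using dg[OF x] DERIV_unique by blast
qed

lemma profile_1_eq:
  assumes "x \<noteq> 0"
  shows "profile 1 x = 2 * cos (x^2) / x - 2 * sin (x^2) / x^3"
proof -
  have "x \<noteq> 0 \<Longrightarrow> ((\<lambda>x. sin (x^2) / x^2) has_real_derivative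
      2 * cos (x^2) / x - 2 * sin (x^2) / x^3) (at x)" for x
    by (rule derivative_eq_intros refl | simp)+ (simp add: field_simps eval_nat_numeral)
  from deriv_transfer_off_0[of 0, OF profile_eq this assms] show ?thesis by simp
qed

lemma profile_2_eq:
  assumes "x \<noteq> 0"
  shows "profile 2 x = -4 * sin (x^2) - 6 * cos (x^2) / x^2 + 6 * sin (x^2) / x^4"
proof -
  have "x \<noteq> 0 \<Longrightarrow> ((\<lambda>x. 2 * cos (x^2) / x - 2 * sin (x^2) / x^3) has_real_derivative
      -4 * sin (x^2) - 6 * cos (x^2) / x^2 + 6 * sin (x^2) / x^4) (at x)" for x
    by (rule derivative_eq_intros refl | simp)+ (simp add: field_simps eval_nat_numeral)
  from deriv_transfer_off_0[of 1, OF profile_1_eq this assms] show ?thesis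
    by (simp add: numeral_2_eq_2)
qed

lemma profile_3_eq:
  assumes "x \<noteq> 0"
  shows "profile 3 x =
     -8 * x * cos (x^2) + 12 * sin (x^2) / x + 24 * cos (x^2) / x^3 - 24 * sin (x^2) / x^5"
proof -
  have "x \<noteq> 0 \<Longrightarrow> ((\<lambda>x. -4 * sin (x^2) - 6 * cos (x^2) / x^2 + 6 * sin (x^2) / x^4)
      has_real_derivative -8 * x * cos (x^2) + 12 * sin (x^2) / x + 24 * cos (x^2) / x^3
        - 24 * sin (x^2) / x^5) (at x)" for x
    by (rule derivative_eq_intros refl | simp)+ (simp add: field_simps eval_nat_numeral)
  from deriv_transfer_off_0[of 2, OF profile_2_eq this assms] show ?thesis
    by (simp add: numeral_3_eq_3 numeral_2_eq_2)
qed

lemma bounded_profile_1: "bounded_fun (profile 1)"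
proof (rule bounded_fun_if_bounded_off_interval[OF continuous_profile, where M = 4])
  fix x :: real assume x: "1 \<le> \<bar>x\<bar>"
  have a: "\<bar>cos (x^2) / x\<bar> \<le> 1" by (rule abs_div_le_1) (use x in auto)
  have b: "\<bar>sin (x^2) / x^3\<bar> \<le> 1"
    by (rule abs_div_le_1) (use one_le_abs_power[OF x, of 3] in auto)
  have "x \<noteq> 0" using x by auto
  show "\<bar>profile 1 x\<bar> \<le> 4"
    unfolding profile_1_eq[OF \<open>x \<noteq> 0\<close>] using a b by (simp add: abs_le_iff; linarith)
qed

lemma bounded_profile_2: "bounded_fun (profile 2)"
proof (rule bounded_fun_if_bounded_off_interval[OF continuous_profile, where M = 16])
  fix x :: real assume x: "1 \<le> \<bar>x\<bar>"
  have a: "\<bar>cos (x^2) / x^2\<bar> \<le> 1"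
    by (rule abs_div_le_1) (use one_le_abs_power[OF x, of 2] in auto)
  have b: "\<bar>sin (x^2) / x^4\<bar> \<le> 1"
    by (rule abs_div_le_1) (use one_le_abs_power[OF x, of 4] in auto)
  have c: "\<bar>sin (x^2)\<bar> \<le> 1" by simp
  have "x \<noteq> 0" using x by auto
  show "\<bar>profile 2 x\<bar> \<le> 16"
    unfolding profile_2_eq[OF \<open>x \<noteq> 0\<close>] using a b c by (simp add: abs_le_iff; linarith)
qed

(* At the points x = sqrt (2 pi n) the third derivative equals -8x + 24/x^3. *)
lemma unbounded_profile_3: "\<not> bounded_fun (profile 3)"
proof
  assume "bounded_fun (profile 3)"
  then obtain M where M: "0 \<le> M" "\<And>x. \<bar>profile 3 x\<bar> \<le> M" using bounded_funE by metis
  obtain n :: nat where n: "(M + 24)^2 < real n" using reals_Archimedean2 by blast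
  define x where "x = sqrt (2 * pi * real n)"
  have "1 * real n \<le> (2 * pi) * real n" using pi_gt3 by (intro mult_right_mono) auto
  hence "sqrt (real n) \<le> x" unfolding x_def by simp
  moreover have "M + 24 < sqrt (real n)"
    using n M(1) by (metis add_nonneg_nonneg real_less_rsqrt zero_le_numeral)
  ultimately have x: "M + 24 < x" by linarith
  have xx: "x^2 = 2 * pi * real n" unfolding x_def by simp
  have s: "sin (x^2) = 0" unfolding xx using sin_int_2pin[of "int n"] by simp
  have c: "cos (x^2) = 1" unfolding xx using cos_int_2pin[of "int n"] by simp
  have x0: "x \<noteq> 0" "1 \<le> x" using x M(1) by auto
  have "profile 3 x = -8 * x + 24 / x^3" using profile_3_eq[OF x0(1)] s c by simp
  moreover have "24 / x^3 \<le> 24" using x0 one_le_abs_power[of x 3] by (simp add: divide_le_eq)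
  moreover have "0 \<le> 24 / x^3" using x0 by simp
  ultimately have "M < \<bar>profile 3 x\<bar>" using x by linarith
  with M(2)[of x] show False by linarith
qed

section \<open>The region below a graph\<close>

definition subgraph :: "(real \<Rightarrow> real) \<Rightarrow> (real \<times> real) set" where
  "subgraph f = {p. snd p < f (fst p)}"

definition fun_graph :: "(real \<Rightarrow> real) \<Rightarrow> (real \<times> real) set" where
  "fun_graph f = {p. snd p = f (fst p)}"

lemma continuous_on_lift_fst:
  "continuous_on UNIV f \<Longrightarrow> continuous_on UNIV (\<lambda>p::real \<times> real. f (fst p))"
  by (rule continuous_on_compose2[of UNIV f]) (auto intro: continuous_intros)

lemma open_subgraph: "continuous_on UNIV f \<Longrightarrow> open (subgraph f)"
  unfolding subgraph_def
  by (rule open_Collect_less[OF continuous_on_snd[OF continuous_on_id] continuous_on_lift_fst])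

lemma closed_fun_graph: "continuous_on UNIV f \<Longrightarrow> closed (fun_graph f)"
  unfolding fun_graph_def
  by (rule closed_Collect_eq[OF continuous_on_snd[OF continuous_on_id] continuous_on_lift_fst])

lemma closure_subgraph:
  assumes "continuous_on UNIV f"
  shows "closure (subgraph f) = {p. snd p \<le> f (fst p)}"
proof
  show "closure (subgraph f) \<subseteq> {p. snd p \<le> f (fst p)}"
    by (rule closure_minimal)
       (auto simp: subgraph_def intro!: closed_Collect_le[OF continuous_on_snd[OF continuous_on_id]
          continuous_on_lift_fst[OF assms]])
  show "{p. snd p \<le> f (fst p)} \<subseteq> closure (subgraph f)"
  proof
    fix p :: "real \<times> real" assume p: "p \<in> {p. snd p \<le> f (fst p)}"
    show "p \<in> closure (subgraph f)" unfolding closure_approachable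
    proof (intro allI impI)
      fix e :: real assume e: "0 < e"
      have "(fst p, snd p - e/2) \<in> subgraph f" using p e by (auto simp: subgraph_def)
      moreover have "dist (fst p, snd p - e/2) p < e"
        using e by (cases p) (simp add: dist_Pair_Pair dist_real_def)
      ultimately show "\<exists>y\<in>subgraph f. dist y p < e" by blast
    qed
  qed
qed

lemma frontier_subgraph: "continuous_on UNIV f \<Longrightarrow> frontier (subgraph f) = fun_graph f"
  unfolding frontier_def closure_subgraph interior_open[OF open_subgraph]
  by (auto simp: subgraph_def fun_graph_def)

(* The subgraph is the image of the half-plane {t > 0} under the shear (x, t) \<mapsto> (x, f x - t). *)
lemma connected_subgraph:
  assumes "continuous_on UNIV f"
  shows "connected (subgraph f)"
proof -
  let ?shear = "\<lambda>q::real \<times> real. (fst q, f (fst q) - snd q)"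
  have image: "subgraph f = ?shear ` (UNIV \<times> {0<..})"
  proof
    show "subgraph f \<subseteq> ?shear ` (UNIV \<times> {0<..})"
    proof
      fix p assume "p \<in> subgraph f"
      thus "p \<in> ?shear ` (UNIV \<times> {0<..})"
        by (intro image_eqI[of _ _ "(fst p, f (fst p) - snd p)"]) (auto simp: subgraph_def)
    qed
    show "?shear ` (UNIV \<times> {0<..}) \<subseteq> subgraph f" by (auto simp: subgraph_def)
  qed
  have "connected (UNIV \<times> {0<..} :: (real \<times> real) set)"
    by (intro convex_connected convex_Times) auto
  moreover have "continuous_on (UNIV \<times> {0<..}) ?shear"
    using continuous_on_lift_fst[OF assms]
    by (intro continuous_intros) (auto intro: continuous_on_subset)
  ultimately show ?thesis unfolding image by (rule connected_continuous_image[rotated])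
qed

lemma Omega2_eq_subgraph: "Omega2 = subgraph (profile 0)"
  unfolding Omega2_def subgraph_def by auto (metis profile_at_0 profile_eq)+

section \<open>Partial derivatives and differentiation along a graph\<close>

lemma Cm_SucD: "Cm (Suc m) U f \<Longrightarrow> Cm m U f"
proof (induction m arbitrary: f)
  case 0
  thus ?case by simp
next
  case (Suc m f)
  thus ?case unfolding Cm.simps(2)[of "Suc m"] Cm.simps(2)[of m] by blast
qed

lemma Cm_le: "m \<le> n \<Longrightarrow> Cm n U f \<Longrightarrow> Cm m U f"
  by (induction n rule: dec_induct) (use Cm_SucD in \<open>auto simp del: Cm.simps\<close>)

lemma Cm_pderivs: "Cm (m + k) U f \<Longrightarrow> g \<in> pderivs k f \<Longrightarrow> Cm m U g"
proof (induction k arbitrary: f)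
  case 0
  thus ?case by simp
next
  case (Suc k f)
  hence "Cm (m + k) U (D1 f)" "Cm (m + k) U (D2 f)" by simp_all
  thus ?case using Suc Cm_le[of m "m + Suc k"] by auto
qed

lemma pderivs_finite: "finite (pderivs m f)"
  by (induction m arbitrary: f) auto

lemma Cm_continuous: "Cm m U f \<Longrightarrow> continuous_on U f"
  by (cases m) auto

lemma mean_value_between:
  fixes g g' :: "real \<Rightarrow> real"
  assumes "\<And>t. \<bar>t - a\<bar> \<le> \<bar>b - a\<bar> \<Longrightarrow> (g has_real_derivative g' t) (at t)"
  obtains \<xi> where "\<bar>\<xi> - a\<bar> \<le> \<bar>b - a\<bar>" "g b - g a = (b - a) * g' \<xi>"
proof (cases a b rule: linorder_cases)
  case less
  then obtain z where "a < z" "z < b" "g b - g a = (b - a) * g' z"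
    using MVT2[OF less, of g g'] assms by force
  thus ?thesis using that[of z] by auto
next
  case equal
  thus ?thesis using that[of a] by simp
next
  case greater
  then obtain z where "b < z" "z < a" "g a - g b = (a - b) * g' z"
    using MVT2[OF greater, of g g'] assms by force
  thus ?thesis using that[of z] by (auto simp: algebra_simps)
qed

(* The increment of h along the horizontal direction, taken at the moving height f x, has
   derivative D1 h when D1 h is continuous: a mean value estimate. *)
lemma partial_increment_has_deriv:
  assumes U: "open U" and inU: "(x0, f x0) \<in> U"
    and diff: "\<And>p. p \<in> U \<Longrightarrow> (\<lambda>t. h (t, snd p)) differentiable (at (fst p))"
    and cont_D1: "isCont (D1 h) (x0, f x0)" and cont_f: "isCont f x0"
  shows "((\<lambda>x. h (x, f x) - h (x0, f x)) has_real_derivative D1 h (x0, f x0)) (at x0)"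
  unfolding has_field_derivative_iff
proof (rule metric_LIM_I)
  fix e :: real assume e: "0 < e"
  define p0 where "p0 = (x0, f x0)"
  obtain d1 where d1: "d1 > 0" "\<And>p. dist p p0 < d1 \<Longrightarrow> dist (D1 h p) (D1 h p0) < e"
    using cont_D1 e unfolding continuous_at_eps_delta p0_def by blast
  obtain d3 where d3: "d3 > 0" "ball p0 d3 \<subseteq> U" using U inU openE unfolding p0_def by blast
  define d where "d = min d1 d3"
  have d: "d > 0" using d1 d3 by (simp add: d_def)
  obtain d2 where d2: "d2 > 0" "\<And>x. dist x x0 < d2 \<Longrightarrow> dist (f x) (f x0) < d/2"
    using cont_f d unfolding continuous_at_eps_delta by (metis half_gt_zero)
  define s where "s = min (d/2) d2"
  show "\<exists>s>0. \<forall>x. x \<noteq> x0 \<and> dist x x0 < s \<longrightarrow>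
          dist ((h (x, f x) - h (x0, f x) - (h (x0, f x0) - h (x0, f x0))) / (x - x0)) (D1 h p0) < e"
  proof (intro exI[of _ s] conjI allI impI)
    show "s > 0" using d d2 by (simp add: s_def)
    fix x assume x: "x \<noteq> x0 \<and> dist x x0 < s"
    have near: "(t, f x) \<in> U" "\<bar>D1 h (t, f x) - D1 h p0\<bar> < e"
      if t: "\<bar>t - x0\<bar> \<le> \<bar>x - x0\<bar>" for t
    proof -
      have "dist (t, f x) p0 \<le> \<bar>t - x0\<bar> + \<bar>f x - f x0\<bar>"
        unfolding p0_def dist_Pair_Pair dist_real_def
        using sqrt_sum_squares_le_sum_abs[of "t - x0" "f x - f x0"] by simp
      moreover have "\<bar>x - x0\<bar> < d/2" "\<bar>f x - f x0\<bar> < d/2"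
        using x d2(2)[of x] by (simp_all add: s_def dist_real_def)
      ultimately have dd: "dist (t, f x) p0 < d" using t by linarith
      show "(t, f x) \<in> U" using dd d3 by (auto simp: d_def dist_commute)
      show "\<bar>D1 h (t, f x) - D1 h p0\<bar> < e" using dd d1 by (simp add: d_def dist_real_def)
    qed
    have deriv: "((\<lambda>t. h (t, f x)) has_real_derivative D1 h (t, f x)) (at t)"
      if "\<bar>t - x0\<bar> \<le> \<bar>x - x0\<bar>" for t
      using diff[OF near(1)[OF that]]
      unfolding D1_def by (simp add: DERIV_deriv_iff_real_differentiable)
    obtain \<xi> where \<xi>: "\<bar>\<xi> - x0\<bar> \<le> \<bar>x - x0\<bar>"
      "h (x, f x) - h (x0, f x) = (x - x0) * D1 h (\<xi>, f x)"
      using mean_value_between[of x0 x "\<lambda>t. h (t, f x)" "\<lambda>t. D1 h (t, f x)"] deriv by blast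
    thus "dist ((h (x, f x) - h (x0, f x) - (h (x0, f x0) - h (x0, f x0))) / (x - x0)) (D1 h p0) < e"
      using near(2)[OF \<xi>(1)] x by (simp add: dist_real_def)
  qed
qed

(* Restriction of a plane function to the graph of f, and its derivative along the graph
   (chain rule with the tangent vector (1, f')). *)
definition along :: "(real \<Rightarrow> real) \<Rightarrow> (real \<times> real \<Rightarrow> real) \<Rightarrow> real \<Rightarrow> real" where
  "along f h x = h (x, f x)"

definition tang ::
  "(real \<Rightarrow> real) \<Rightarrow> (real \<Rightarrow> real) \<Rightarrow> (real \<times> real \<Rightarrow> real) \<Rightarrow> real \<Rightarrow> real" where
  "tang f f' h x = along f (D1 h) x + along f (D2 h) x * f' x"

lemma has_deriv_along:
  assumes U: "open U" and inU: "(x, f x) \<in> U" and h: "Cm 1 U h"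
    and f: "(f has_real_derivative f' x) (at x)"
  shows "(along f h has_real_derivative tang f f' h x) (at x)"
proof -
  have diff: "\<And>p. p \<in> U \<Longrightarrow> (\<lambda>t. h (t, snd p)) differentiable (at (fst p)) \<and>
                                 (\<lambda>t. h (fst p, t)) differentiable (at (snd p))"
    and cont: "continuous_on U (D1 h)"
    using h by simp_all
  have "isCont (D1 h) (x, f x)" using cont U inU by (simp add: continuous_on_eq_continuous_at)
  hence horizontal: "((\<lambda>y. h (y, f y) - h (x, f y)) has_real_derivative D1 h (x, f x)) (at x)"
    using partial_increment_has_deriv[of U x f h, OF U inU] diff DERIV_isCont[OF f] by blast
  have "((\<lambda>t. h (x, t)) has_real_derivative D2 h (x, f x)) (at (f x))"
    using diff[OF inU] unfolding D2_def by (simp add: DERIV_deriv_iff_real_differentiable)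
  hence vertical: "((\<lambda>y. h (x, f y)) has_real_derivative D2 h (x, f x) * f' x) (at x)"
    by (rule DERIV_chain2[OF _ f])
  show ?thesis
    using DERIV_add[OF horizontal vertical] by (simp add: along_def[abs_def] tang_def)
qed

lemma has_deriv_tang:
  assumes U: "open U" and inU: "(x, f x) \<in> U" and h: "Cm 2 U h"
    and f: "(f has_real_derivative f' x) (at x)" and f': "(f' has_real_derivative f'' x) (at x)"
  shows "(tang f f' h has_real_derivative
            tang f f' (D1 h) x + tang f f' (D2 h) x * f' x + along f (D2 h) x * f'' x) (at x)"
proof -
  have "Cm 1 U (D1 h)" "Cm 1 U (D2 h)" using h by (simp_all add: numeral_2_eq_2)
  note along' = has_deriv_along[of U x f "D1 h" f', OF U inU \<open>Cm 1 U (D1 h)\<close> f]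
    has_deriv_along[of U x f "D2 h" f', OF U inU \<open>Cm 1 U (D2 h)\<close> f]
  have "((\<lambda>x. along f (D1 h) x + along f (D2 h) x * f' x) has_real_derivative
          tang f f' (D1 h) x + (tang f f' (D2 h) x * f' x + f'' x * along f (D2 h) x)) (at x)"
    by (rule DERIV_add[OF along'(1) DERIV_mult[OF along'(2) f']])
  thus ?thesis unfolding tang_def[of f f' h, abs_def] by (simp add: algebra_simps)
qed

section \<open>Defining functions for the region below a smooth graph\<close>

lemma lipschitz_from_deriv:
  fixes f :: "real \<Rightarrow> real"
  assumes "\<And>x. (f has_real_derivative f' x) (at x)" and "\<And>x. \<bar>f' x\<bar> \<le> L"
  shows "\<bar>f x - f y\<bar> \<le> L * \<bar>x - y\<bar>"
  using field_differentiable_bound[of UNIV f f' L x y] assms by simp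

definition band :: "(real \<Rightarrow> real) \<Rightarrow> (real \<times> real) set" where
  "band f = {p. \<bar>snd p - f (fst p)\<bar> < 1}"

lemma open_band: "continuous_on UNIV f \<Longrightarrow> open (band f)"
  unfolding band_def
  by (intro open_Collect_less continuous_intros continuous_on_lift_fst)

lemma frontier_band:
  assumes "continuous_on UNIV f"
  shows "frontier (band f) \<subseteq> {p. \<bar>snd p - f (fst p)\<bar> = 1}"
proof -
  have "closed {p::real \<times> real. \<bar>snd p - f (fst p)\<bar> \<le> 1}"
    by (intro closed_Collect_le continuous_intros continuous_on_lift_fst[OF assms])
  hence "closure (band f) \<subseteq> {p. \<bar>snd p - f (fst p)\<bar> \<le> 1}"
    by (intro closure_minimal) (auto simp: band_def)
  thus ?thesis
    unfolding frontier_def interior_open[OF open_band[OF assms]] by (auto simp: band_def)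
qed

lemma graph_band_separation:
  assumes lip: "\<And>x y. \<bar>f x - f y\<bar> \<le> L * \<bar>x - y\<bar>" and L: "0 \<le> L"
    and a: "snd a = f (fst a)" and b: "\<bar>snd b - f (fst b)\<bar> = 1"
  shows "1 / (1 + L) \<le> dist a b"
proof (cases "1 / (1 + L) \<le> \<bar>fst a - fst b\<bar>")
  case True
  thus ?thesis using dist_fst_le[of a b] by (simp add: dist_real_def)
next
  case False
  hence "L * \<bar>fst a - fst b\<bar> \<le> L * (1 / (1 + L))" using L by (intro mult_left_mono) auto
  moreover have "L * (1 / (1 + L)) = 1 - 1 / (1 + L)" using L by (simp add: field_simps)
  ultimately have "1 / (1 + L) \<le> \<bar>snd a - snd b\<bar>" using lip[of "fst a" "fst b"] a b by linarith
  thus ?thesis using dist_snd_le[of a b] by (simp add: dist_real_def)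
qed

(* Functions a y + b + e F_k(x) built from a derivative tower F are closed under partial
   differentiation; y - F_0(x) is the natural defining function of the region below F_0. *)
definition affine_lift ::
  "(nat \<Rightarrow> real \<Rightarrow> real) \<Rightarrow> real \<Rightarrow> real \<Rightarrow> real \<Rightarrow> nat \<Rightarrow> real \<times> real \<Rightarrow> real" where
  "affine_lift F a b e k p = a * snd p + b + e * F k (fst p)"

context
  fixes F :: "nat \<Rightarrow> real \<Rightarrow> real"
  assumes tower: "\<And>k x. (F k has_real_derivative F (Suc k) x) (at x)"
begin

lemma affine_lift_partials:
  "((\<lambda>t. affine_lift F a b e k (t, y)) has_real_derivative e * F (Suc k) x) (at x)"
  "((\<lambda>t. affine_lift F a b e k (x, t)) has_real_derivative a) (at y)"
  unfolding affine_lift_def by (rule derivative_eq_intros tower refl | simp)+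

lemma D1_affine_lift: "D1 (affine_lift F a b e k) = affine_lift F 0 0 e (Suc k)"
  using affine_lift_partials(1) by (auto simp: D1_def DERIV_imp_deriv affine_lift_def)

lemma D2_affine_lift: "D2 (affine_lift F a b e k) = affine_lift F 0 a 0 k"
  using affine_lift_partials(2) by (auto simp: D2_def DERIV_imp_deriv affine_lift_def)

lemma continuous_F: "continuous_on UNIV (F k)"
  using tower by (meson DERIV_isCont continuous_at_imp_continuous_on)

lemma continuous_affine_lift: "continuous_on U (affine_lift F a b e k)"
  unfolding affine_lift_def
  by (intro continuous_intros continuous_on_subset[OF continuous_on_lift_fst[OF continuous_F]]) auto

lemma Cm_affine_lift: "Cm m U (affine_lift F a b e k)"
proof (induction m arbitrary: a b e k)
  case 0
  show ?case by (simp add: continuous_affine_lift)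
next
  case (Suc m)
  have "(\<lambda>t. affine_lift F a b e k (t, y)) differentiable (at x)"
       "(\<lambda>t. affine_lift F a b e k (x, t)) differentiable (at y)" for x y
    using affine_lift_partials real_differentiable_def by blast+
  thus ?case using Suc by (simp add: continuous_affine_lift D1_affine_lift D2_affine_lift)
qed

abbreviation graph_defining_fun :: "real \<times> real \<Rightarrow> real" where
  "graph_defining_fun \<equiv> affine_lift F 1 0 (-1) 0"

lemma grad_graph_defining_fun: "grad graph_defining_fun p = (- F 1 (fst p), 1)"
  unfolding grad_def D1_affine_lift D2_affine_lift by (simp add: affine_lift_def)

lemma subgraph_defining_function:
  "defining_function m (subgraph (F 0)) (band (F 0)) graph_defining_fun"
  unfolding defining_function_def frontier_subgraph[OF continuous_F]
  using open_band[OF continuous_F]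
  by (auto simp: Cm_affine_lift grad_graph_defining_fun
      subgraph_def fun_graph_def band_def affine_lift_def zero_prod_def)

lemma subgraph_uniform_C2:
  assumes "bounded_fun (F 1)" and "bounded_fun (F 2)"
  shows "uniform_defining_function 2 (subgraph (F 0)) (band (F 0)) graph_defining_fun"
proof -
  obtain L where L: "0 \<le> L" "\<And>x. \<bar>F 1 x\<bar> \<le> L" using assms(1) bounded_funE by blast
  obtain K where K: "0 \<le> K" "\<And>x. \<bar>F 2 x\<bar> \<le> K" using assms(2) bounded_funE by blast
  have "\<bar>F 0 x - F 0 y\<bar> \<le> L * \<bar>x - y\<bar>" for x y
    by (rule lipschitz_from_deriv[of "F 0" "F 1"]) (use tower[of 0] L in auto)
  hence separated:
    "\<exists>\<delta>>0. \<forall>a\<in>frontier (subgraph (F 0)). \<forall>b\<in>frontier (band (F 0)). \<delta> \<le> dist a b"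
    using L(1) graph_band_separation[of "F 0" L] frontier_band[OF continuous_F, of 0]
    unfolding frontier_subgraph[OF continuous_F] fun_graph_def
    by (intro exI[of _ "1 / (1 + L)"]) auto
  have "pderivs 2 graph_defining_fun = {affine_lift F 1 0 (-1) 0, affine_lift F 0 0 (-1) 1,
      affine_lift F 0 0 (-1) 2, affine_lift F 0 0 0 1, affine_lift F 0 1 0 0, affine_lift F 0 0 0 0}"
    by (simp add: numeral_2_eq_2 D1_affine_lift D2_affine_lift) blast
  hence "\<bar>g p\<bar> \<le> 1 + L + K" if "p \<in> band (F 0)" "g \<in> pderivs 2 graph_defining_fun" for g p
    using that L(1) K(1) L(2)[of "fst p"] K(2)[of "fst p"] by (auto simp: affine_lift_def band_def)
  hence bounded_derivs:
    "\<forall>p\<in>band (F 0). (\<Sum>g\<in>pderivs 2 graph_defining_fun. \<bar>g p\<bar>)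
        \<le> card (pderivs 2 graph_defining_fun) * (1 + L + K)"
    by (auto intro: sum_bounded_above)
  have "\<forall>p. 1 \<le> norm (grad graph_defining_fun p)"
    unfolding grad_graph_defining_fun norm_Pair by simp
  thus ?thesis
    unfolding uniform_defining_function_def
    using subgraph_defining_function separated bounded_derivs zero_less_one by blast
qed

end

section \<open>Positive reach of a graph with bounded first and second derivatives\<close>

lemma reach_pos_if_uniform_balls:
  assumes "0 < r" and "\<And>y. y \<in> S \<Longrightarrow> ball y r \<subseteq> Unp S"
  shows "0 < reach S"
proof -
  have "ereal r \<le> reach S" unfolding reach_def
  proof (rule INF_greatest)
    fix y assume "y \<in> S"
    hence "r \<in> {r. 0 \<le> r \<and> ball y r \<subseteq> Unp S}" using assms by auto
    thus "ereal r \<le> (SUP r\<in>{r. 0 \<le> r \<and> ball y r \<subseteq> Unp S}. ereal r)" by (rule SUP_upper)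
  qed
  thus ?thesis using assms(1) by (metis ereal_less(2) order_less_le_trans)
qed

(* Two distinct nearest graph points t1 < t2 of p would force the second derivative of the
   squared distance t \<mapsto> (t - px)^2 + (f t - py)^2 to vanish between them; but close to the
   graph that second derivative is at least 1. *)
lemma nearest_graph_points_unique:
  fixes f f1 f2 :: "real \<Rightarrow> real"
  assumes f: "\<And>x. (f has_real_derivative f1 x) (at x)"
    and f1: "\<And>x. (f1 has_real_derivative f2 x) (at x)"
    and L: "0 \<le> L" "\<And>x. \<bar>f1 x\<bar> \<le> L" and K: "0 \<le> K" "\<And>x. \<bar>f2 x\<bar> \<le> K"
    and t12: "t1 < t2"
    and min1: "\<And>t. (t1 - px)^2 + (f t1 - py)^2 \<le> (t - px)^2 + (f t - py)^2"
    and min2: "\<And>t. (t2 - px)^2 + (f t2 - py)^2 \<le> (t - px)^2 + (f t - py)^2"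
    and close: "\<bar>t1 - px\<bar> \<le> d" "\<bar>f t1 - py\<bar> \<le> d" "\<bar>t2 - px\<bar> \<le> d"
    and small: "d * (1 + 2*L) * (2*(K+1)) < 1"
  shows False
proof -
  define \<phi> where "\<phi> t = (t - px)^2 + (f t - py)^2" for t
  define \<phi>1 where "\<phi>1 t = 2*(t - px) + 2*(f t - py) * f1 t" for t
  define \<phi>2 where "\<phi>2 t = 2 + 2*(f1 t)^2 + 2*(f t - py) * f2 t" for t
  have d\<phi>: "(\<phi> has_real_derivative \<phi>1 t) (at t)" for t
    unfolding \<phi>_def[abs_def] \<phi>1_def by (rule derivative_eq_intros f refl | simp)+
  have d\<phi>1: "(\<phi>1 has_real_derivative \<phi>2 t) (at t)" for t
    unfolding \<phi>1_def[abs_def] \<phi>2_def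
    by (rule derivative_eq_intros f f1 refl | simp)+ (simp add: algebra_simps power2_eq_square)
  have "\<phi>1 t1 = 0" "\<phi>1 t2 = 0"
    by (rule DERIV_local_min[OF d\<phi> zero_less_one]; use min1 min2 in \<open>simp add: \<phi>_def\<close>)+
  moreover obtain \<xi> where \<xi>: "t1 < \<xi>" "\<xi> < t2" "\<phi>1 t2 - \<phi>1 t1 = (t2 - t1) * \<phi>2 \<xi>"
    using MVT2[OF t12, of \<phi>1 \<phi>2] d\<phi>1 by metis
  ultimately have "\<phi>2 \<xi> = 0" using t12 by simp
  moreover have "\<bar>(f \<xi> - py) * f2 \<xi>\<bar> < 1/2"
  proof -
    have "\<bar>f \<xi> - f t1\<bar> \<le> L * \<bar>\<xi> - t1\<bar>" by (rule lipschitz_from_deriv[OF f L(2)])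
    moreover have "L * \<bar>\<xi> - t1\<bar> \<le> L * (2*d)" using \<xi> close L(1) by (intro mult_left_mono) auto
    ultimately have "\<bar>f \<xi> - py\<bar> \<le> d * (1 + 2*L)" using close(2) by (simp add: algebra_simps; linarith)
    hence "\<bar>(f \<xi> - py) * f2 \<xi>\<bar> \<le> d * (1 + 2*L) * (K + 1)"
      unfolding abs_mult using K close(1) by (intro mult_mono) (auto intro: order_trans[OF K(2)])
    thus ?thesis using small by linarith
  qed
  moreover have "2 * (f \<xi> - py) * f2 \<xi> = 2 * ((f \<xi> - py) * f2 \<xi>)" by simp
  ultimately show False unfolding \<phi>2_def using zero_le_power2[of "f1 \<xi>"] by linarith
qed

lemma dist_to_graph_point: "dist p (t, f t) = sqrt ((t - fst p)^2 + (f t - snd p)^2)"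
  by (cases p) (simp add: dist_Pair_Pair dist_real_def power2_commute)

lemma unique_nearest_point_near_graph:
  fixes f f1 f2 :: "real \<Rightarrow> real"
  assumes f: "\<And>x. (f has_real_derivative f1 x) (at x)"
    and f1: "\<And>x. (f1 has_real_derivative f2 x) (at x)"
    and L: "0 \<le> L" "\<And>x. \<bar>f1 x\<bar> \<le> L" and K: "0 \<le> K" "\<And>x. \<bar>f2 x\<bar> \<le> K"
    and y: "y \<in> fun_graph f" and near: "dist p y * (1 + 2*L) * (2*(K+1)) < 1"
  shows "p \<in> Unp (fun_graph f)"
proof -
  define S where "S = fun_graph f"
  have "closed S" unfolding S_def
    using f by (intro closed_fun_graph) (meson DERIV_isCont continuous_at_imp_continuous_on)
  then obtain q where q: "q \<in> S" "\<And>z. z \<in> S \<Longrightarrow> dist p q \<le> dist p z"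
    using distance_attains_inf[of S p] y unfolding S_def by blast
  have small: "dist p q * (1 + 2*L) * (2*(K+1)) < 1"
    using q(2)[of y] y near L K unfolding S_def
    by (smt (verit, best) mult_right_mono zero_le_mult_iff)
  show "p \<in> Unp (fun_graph f)" unfolding Unp_def S_def[symmetric]
  proof (intro CollectI ex1I[of _ q] conjI ballI)
    fix q' assume q': "q' \<in> S \<and> (\<forall>z\<in>S. dist p q' \<le> dist p z)"
    define t1 t2 where "t1 = fst q" and "t2 = fst q'"
    have qs: "q = (t1, f t1)" "q' = (t2, f t2)"
      using q(1) q' unfolding S_def fun_graph_def t1_def t2_def by (cases q, cases q', simp)+
    have same_dist: "dist p q' = dist p q" using q' q by (meson order_antisym)
    have minimal: "(ta - fst p)^2 + (f ta - snd p)^2 \<le> (t - fst p)^2 + (f t - snd p)^2"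
      and close: "\<bar>ta - fst p\<bar> \<le> dist p q" "\<bar>f ta - snd p\<bar> \<le> dist p q"
      if "ta = t1 \<or> ta = t2" for ta t
    proof -
      have "dist p (ta, f ta) = dist p q" using that qs same_dist by auto
      moreover have "(t, f t) \<in> S" unfolding S_def fun_graph_def by simp
      ultimately have "dist p (ta, f ta) \<le> dist p (t, f t)" using q(2) by simp
      thus "(ta - fst p)^2 + (f ta - snd p)^2 \<le> (t - fst p)^2 + (f t - snd p)^2"
        unfolding dist_to_graph_point by simp
      show "\<bar>ta - fst p\<bar> \<le> dist p q" "\<bar>f ta - snd p\<bar> \<le> dist p q"
        using \<open>dist p (ta, f ta) = dist p q\<close> dist_fst_le[of p "(ta, f ta)"]
          dist_snd_le[of p "(ta, f ta)"]
        by (simp_all add: dist_real_def abs_minus_commute)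
    qed
    have no_order: "\<not> ta < tb" if "ta = t1 \<and> tb = t2 \<or> ta = t2 \<and> tb = t1" for ta tb
    proof
      assume "ta < tb"
      show False
        by (rule nearest_graph_points_unique[OF f f1 L K \<open>ta < tb\<close> minimal minimal
              close(1) close(2) close(1) small]) (use that in auto)
    qed
    have "t1 = t2" using no_order[of t1 t2] no_order[of t2 t1] by simp
    thus "q' = q" using qs by simp
  qed (use q in auto)
qed

lemma reach_graph_pos:
  fixes f f1 f2 :: "real \<Rightarrow> real"
  assumes f: "\<And>x. (f has_real_derivative f1 x) (at x)"
    and f1: "\<And>x. (f1 has_real_derivative f2 x) (at x)"
    and "bounded_fun f1" and "bounded_fun f2"
  shows "0 < reach (fun_graph f)"
proof -
  obtain L where L: "0 \<le> L" "\<And>x. \<bar>f1 x\<bar> \<le> L" using assms(3) bounded_funE by blast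
  obtain K where K: "0 \<le> K" "\<And>x. \<bar>f2 x\<bar> \<le> K" using assms(4) bounded_funE by blast
  define r0 where "r0 = 1 / ((1 + 2*L) * (2*(K+1)))"
  have pos: "0 < (1 + 2*L) * (2*(K+1))" using L K by simp
  hence r0: "0 < r0" unfolding r0_def by simp
  have "ball y r0 \<subseteq> Unp (fun_graph f)" if "y \<in> fun_graph f" for y
  proof
    fix p assume "p \<in> ball y r0"
    hence "dist p y * (1 + 2*L) * (2*(K+1)) < 1"
      using pos unfolding r0_def by (simp add: dist_commute field_simps)
    thus "p \<in> Unp (fun_graph f)" by (rule unique_nearest_point_near_graph[OF f f1 L K that])
  qed
  thus ?thesis by (rule reach_pos_if_uniform_balls[OF r0])
qed

section \<open>No uniformly C^3 defining function when the third derivative is unbounded\<close>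

(* A continuous defining function vanishes on the boundary: it is \<ge> 0 off the open domain,
   and \<le> 0 on its closure. *)
lemma defining_function_vanishes:
  assumes def: "defining_function m \<Omega> U \<rho>" and "open \<Omega>" and p: "p \<in> frontier \<Omega>"
  shows "\<rho> p = 0"
proof -
  have U: "open U" "p \<in> U" and neg: "{q \<in> U. \<rho> q < 0} = \<Omega> \<inter> U"
    and cont: "continuous_on U \<rho>"
    using def p Cm_continuous by (auto simp: defining_function_def)
  have "p \<notin> \<Omega>" using p \<open>open \<Omega>\<close> by (simp add: frontier_def interior_open)
  hence "\<not> \<rho> p < 0" using neg U by blast
  moreover have "\<not> 0 < \<rho> p"
  proof
    assume pos: "0 < \<rho> p"
    have "isCont \<rho> p" using cont U by (simp add: continuous_on_eq_continuous_at)
    then obtain d1 where d1: "d1 > 0" "\<And>q. dist q p < d1 \<Longrightarrow> dist (\<rho> q) (\<rho> p) < \<rho> p"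
      using pos unfolding continuous_at_eps_delta by blast
    obtain d2 where d2: "d2 > 0" "ball p d2 \<subseteq> U" using U openE by blast
    have "p \<in> closure \<Omega>" using p by (simp add: frontier_def)
    then obtain q where q: "q \<in> \<Omega>" "dist q p < min d1 d2"
      using d1(1) d2(1) unfolding closure_approachable by (meson min_less_iff_conj)
    have "q \<in> U" using q(2) d2(2) by (auto simp: dist_commute)
    hence "\<rho> q < 0" using q(1) neg by blast
    moreover have "dist (\<rho> q) (\<rho> p) < \<rho> p" using d1(2) q(2) by simp
    ultimately show False by (simp add: dist_real_def)
  qed
  ultimately show ?thesis by linarith
qed

lemma zero_deriv_of_zero: "(g has_real_derivative D) (at x) \<Longrightarrow> (\<And>y. g y = 0) \<Longrightarrow> D = 0"
  using DERIV_unique DERIV_const by (metis ext)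

(* Differentiating \<rho>(x, f x) = 0 once and three times along the graph. *)
lemma graph_derivative_identities:
  fixes f f1 f2 f3 :: "real \<Rightarrow> real"
  assumes U: "open U" and inU: "\<And>x. (x, f x) \<in> U" and \<rho>: "Cm 3 U \<rho>"
    and vanish: "\<And>x. \<rho> (x, f x) = 0"
    and f: "\<And>x. (f has_real_derivative f1 x) (at x)"
    and f1: "\<And>x. (f1 has_real_derivative f2 x) (at x)"
    and f2: "\<And>x. (f2 has_real_derivative f3 x) (at x)"
  shows "tang f f1 \<rho> x = 0"
    and "along f (D2 \<rho>) x * f3 x =
      - (tang f f1 (D1 (D1 \<rho>)) x + tang f f1 (D2 (D1 \<rho>)) x * f1 x + along f (D2 (D1 \<rho>)) x * f2 x
         + (tang f f1 (D1 (D2 \<rho>)) x + tang f f1 (D2 (D2 \<rho>)) x * f1 x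
            + along f (D2 (D2 \<rho>)) x * f2 x) * f1 x
         + 2 * (f2 x * tang f f1 (D2 \<rho>) x))"
proof -
  have C: "Cm 1 U \<rho>" "Cm 2 U \<rho>" by (rule Cm_le[OF _ \<rho>], simp)+
  have "Cm (2 + 1) U \<rho>" using \<rho> by simp
  have CD: "Cm 2 U (D1 \<rho>)" "Cm 2 U (D2 \<rho>)"
    by (rule Cm_pderivs[OF \<open>Cm (2 + 1) U \<rho>\<close>], simp)+
  have "Cm 1 U (D2 \<rho>)" by (rule Cm_le[OF _ CD(2)]) simp
  note tang' = has_deriv_tang[of U _ f _ f1 f2, OF U inU _ f f1]
  have E1: "tang f f1 \<rho> y = 0" for y
    by (rule zero_deriv_of_zero[OF has_deriv_along[of U y f \<rho> f1, OF U inU C(1) f]])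
       (simp add: along_def vanish)
  thus "tang f f1 \<rho> x = 0" .
  \<comment> \<open>the derivative of \<open>tang f f1 \<rho>\<close>, i.e. the second derivative of \<open>\<rho>(x, f x)\<close>\<close>
  define E2 where
    "E2 y = tang f f1 (D1 \<rho>) y + tang f f1 (D2 \<rho>) y * f1 y + along f (D2 \<rho>) y * f2 y" for y
  have E2_zero: "E2 y = 0" for y
    unfolding E2_def by (rule zero_deriv_of_zero[OF tang'[where x=y, OF C(2)] E1])
  have "(E2 has_real_derivative
      (tang f f1 (D1 (D1 \<rho>)) x + tang f f1 (D2 (D1 \<rho>)) x * f1 x + along f (D2 (D1 \<rho>)) x * f2 x)
      + ((tang f f1 (D1 (D2 \<rho>)) x + tang f f1 (D2 (D2 \<rho>)) x * f1 x
          + along f (D2 (D2 \<rho>)) x * f2 x) * f1 x + f2 x * tang f f1 (D2 \<rho>) x)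
      + (tang f f1 (D2 \<rho>) x * f2 x + f3 x * along f (D2 \<rho>) x)) (at x)"
    unfolding E2_def[abs_def]
    by (intro DERIV_add DERIV_mult tang'[where x=x, OF CD(1)] tang'[where x=x, OF CD(2)]
        has_deriv_along[of U x f "D2 \<rho>" f1, OF U inU \<open>Cm 1 U (D2 \<rho>)\<close> f] f1 f2)
  from zero_deriv_of_zero[OF this E2_zero]
  show "along f (D2 \<rho>) x * f3 x = - (tang f f1 (D1 (D1 \<rho>)) x
      + tang f f1 (D2 (D1 \<rho>)) x * f1 x + along f (D2 (D1 \<rho>)) x * f2 x
      + (tang f f1 (D1 (D2 \<rho>)) x + tang f f1 (D2 (D2 \<rho>)) x * f1 x
         + along f (D2 (D2 \<rho>)) x * f2 x) * f1 x
      + 2 * (f2 x * tang f f1 (D2 \<rho>) x))"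
    by (simp add: algebra_simps)
qed

(* On the graph, the tangential derivative of \<rho> vanishes, so the gradient bound c forces the
   vertical partial derivative D2 \<rho> to stay away from 0. *)
lemma normal_derivative_lower_bound:
  assumes tang0: "tang f f1 \<rho> x = 0" and L: "\<bar>f1 x\<bar> \<le> L" "0 \<le> L"
    and c: "c \<le> norm (grad \<rho> (x, f x))"
  shows "c / (1 + L) \<le> \<bar>along f (D2 \<rho>) x\<bar>"
proof -
  have "c \<le> \<bar>along f (D1 \<rho>) x\<bar> + \<bar>along f (D2 \<rho>) x\<bar>"
    using c by (simp add: grad_def norm_Pair along_def sqrt_sum_squares_le_sum_abs order_trans)
  also have "\<dots> \<le> \<bar>along f (D2 \<rho>) x\<bar> * (1 + L)"
    using tang0 mult_left_mono[OF L(1), of "\<bar>along f (D2 \<rho>) x\<bar>"]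
    by (simp add: tang_def abs_mult algebra_simps eq_neg_iff_add_eq_0[symmetric])
  finally show ?thesis using L(2) by (simp add: divide_le_eq)
qed

(* In the third-order identity every term except
   D2 \<rho> * f3 is bounded, and D2 \<rho> is bounded away from 0 on the graph. *)
lemma bounded_third_derivative_if_uniform_C3:
  fixes f f1 f2 f3 :: "real \<Rightarrow> real"
  assumes f: "\<And>x. (f has_real_derivative f1 x) (at x)"
    and f1: "\<And>x. (f1 has_real_derivative f2 x) (at x)"
    and f2: "\<And>x. (f2 has_real_derivative f3 x) (at x)"
    and bdd: "bounded_fun f1" "bounded_fun f2"
    and unif: "uniform_defining_function 3 (subgraph f) U \<rho>"
  shows "bounded_fun f3"
proof -
  have cont: "continuous_on UNIV f" using f by (meson DERIV_isCont continuous_at_imp_continuous_on)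
  have def: "defining_function 3 (subgraph f) U \<rho>" and U: "open U" and C3: "Cm 3 U \<rho>"
    and inU: "\<And>x. (x, f x) \<in> U"
    using unif frontier_subgraph[OF cont]
    by (auto simp: uniform_defining_function_def defining_function_def fun_graph_def)
  obtain B where B: "\<And>p. p \<in> U \<Longrightarrow> (\<Sum>g\<in>pderivs 3 \<rho>. \<bar>g p\<bar>) \<le> B"
    using unif by (auto simp: uniform_defining_function_def)
  obtain c where c: "0 < c" "\<And>p. p \<in> U \<Longrightarrow> c \<le> norm (grad \<rho> p)"
    using unif by (auto simp: uniform_defining_function_def)
  obtain L where L: "0 \<le> L" "\<And>x. \<bar>f1 x\<bar> \<le> L" using bdd(1) bounded_funE by blast
  have vanish: "\<rho> (x, f x) = 0" for x
    using defining_function_vanishes[OF def open_subgraph[OF cont]] frontier_subgraph[OF cont]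
    by (simp add: fun_graph_def)
  note ids = graph_derivative_identities[OF U inU C3 vanish f f1 f2]
  have along_bdd: "bounded_fun (along f g)" if "g \<in> pderivs 3 \<rho>" for g
  proof -
    have "\<bar>g (x, f x)\<bar> \<le> B" for x
    proof -
      have "\<bar>g (x, f x)\<bar> \<le> (\<Sum>g\<in>pderivs 3 \<rho>. \<bar>g (x, f x)\<bar>)"
        by (rule member_le_sum[OF that]) (simp_all add: pderivs_finite)
      thus ?thesis using B[OF inU[of x]] by linarith
    qed
    thus ?thesis unfolding bounded_fun_def along_def by blast
  qed
  have tang_bdd: "bounded_fun (tang f f1 g)" if "D1 g \<in> pderivs 3 \<rho>" "D2 g \<in> pderivs 3 \<rho>" for g
    unfolding tang_def[abs_def] by (intro bounded_fun_add bounded_fun_mult along_bdd that bdd(1))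
  have product_bdd: "bounded_fun (\<lambda>x. along f (D2 \<rho>) x * f3 x)"
    unfolding ids(2) using bdd
    by (intro bounded_fun_uminus bounded_fun_add bounded_fun_mult bounded_fun_const along_bdd
        tang_bdd) (simp_all add: numeral_3_eq_3)
  have lower: "c / (1 + L) \<le> \<bar>along f (D2 \<rho>) x\<bar>" for x
    by (rule normal_derivative_lower_bound[OF ids(1) L(2) L(1) c(2)[OF inU]])
  show ?thesis
    by (rule bounded_fun_cancel[OF product_bdd _ lower]) (use c(1) L(1) in simp)
qed

theorem mainTheorem8:
  shows "open Omega2 \<and> connected Omega2 \<and>
         (\<exists>U \<rho>. smooth_defining_function Omega2 U \<rho>) \<and>
         (\<exists>U \<rho>. uniform_defining_function 2 Omega2 U \<rho>) \<and>
         reach (frontier Omega2) > 0 \<and>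
         \<not> (\<exists>U \<rho>. uniform_defining_function 3 Omega2 U \<rho>)"
proof (intro conjI)
  have cont: "continuous_on UNIV (profile 0)" by (rule continuous_profile)
  show "open Omega2" "connected Omega2"
    unfolding Omega2_eq_subgraph using open_subgraph[OF cont] connected_subgraph[OF cont] by auto
  show "\<exists>U \<rho>. smooth_defining_function Omega2 U \<rho>"
    unfolding Omega2_eq_subgraph smooth_defining_function_def
    using subgraph_defining_function[where F=profile, OF profile_has_deriv] by blast
  show "\<exists>U \<rho>. uniform_defining_function 2 Omega2 U \<rho>"
    unfolding Omega2_eq_subgraph
    using subgraph_uniform_C2[where F=profile, OF profile_has_deriv bounded_profile_1
        bounded_profile_2] by blast
  show "reach (frontier Omega2) > 0"
    unfolding Omega2_eq_subgraph frontier_subgraph[OF cont]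
    by (rule reach_graph_pos[OF profile_derivs(1,2) bounded_profile_1 bounded_profile_2])
  show "\<not> (\<exists>U \<rho>. uniform_defining_function 3 Omega2 U \<rho>)"
    unfolding Omega2_eq_subgraph
    using bounded_third_derivative_if_uniform_C3[OF profile_derivs bounded_profile_1
        bounded_profile_2] unbounded_profile_3 by blast
qed

end
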